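(* (a) If $\xi_1(\beta)\le C<\frac{\beta u_0}{r}$, then the function $$f_C(z)=\frac{\beta u_0}{r}-\frac{\frac{\beta u_0}{r}-C}{e^{\alpha_1d}+\frac{\alpha_1}{\alpha_2}e^{-\alpha_2d}}\Big(e^{\alpha_1z}+\frac{\alpha_1}{\alpha_2}e^{-\alpha_2z}\Big),\quad z\in[0,d],$$ solves Problem 1 with $f_C'(0)=0$ and $f_C(d)=C$. (b) If $\frac{\beta u_0-1}{r}<C\le\xi_2(\beta)$, then the function $$g_C(z)=\frac{\beta u_0-1}{r}+\Big(C-\frac{\beta u_0-1}{r}\Big)e^{-\alpha_2(z-d)},\quad z\in[d,\infty),$$ solves Problem 2 with $g_C(d)=C$ and $g_C$ bounded.
   Context: Fix $\mu\in\mathbb R$, $\sigma>0$, $u_0>0$, $r>0$, $\beta>0$, $d>0$. For $u\in[0,u_0]$ let $\theta_1(u)=\frac{\sqrt{(\mu-u)^2+2r\sigma^2}+(\mu-u)}{\sigma^2}$, $\theta_2(u)=\frac{\sqrt{(\mu-u)^2+2r\sigma^2}-(\mu-u)}{\sigma^2}$; $\alpha_1=\theta_1(u_0)$, $\alpha_2=\theta_2(u_0)$. Let $\xi_1(\beta)=\frac{\beta u_0}{r}-\beta\frac{e^{\alpha_1d}+\frac{\alpha_1}{\alpha_2}e^{-\alpha_2d}}{\alpha_1(e^{\alpha_1d}-e^{-\alpha_2d})}$ and $\xi_2(\beta)=\frac{\beta u_0-1}{r}+\frac{\beta}{\alpha_2}$. Problem 1: a bounded twice continuously differentiable function $f$ on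 $[0,d]$ satisfying $-rf(z)-\mu f'(z)+\frac{\sigma^2}{2}f''(z)+\sup_{u\in[0,u_0]}\{(\beta+f'(z))u\}=0$ for $z\in[0,d]$ (with one-sided derivatives at the endpoints). Problem 2: a bounded twice continuously differentiable function $g$ on $[d,\infty)$ satisfying $-rg(z)-\mu g'(z)+\frac{\sigma^2}{2}g''(z)+\sup_{u\in[0,u_0]}\{(\beta+g'(z))u\}=1$ for $z\ge d$. *)

theory Defs
  imports "HOL-Analysis.Analysis"
begin

definition theta1 :: "real \<Rightarrow> real \<Rightarrow> real \<Rightarrow> real \<Rightarrow> real" where
  "theta1 \<mu> \<sigma> r u = (sqrt ((\<mu> - u)\<^sup>2 + 2 * r * \<sigma>\<^sup>2) + (\<mu> - u)) / \<sigma>\<^sup>2"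

definition theta2 :: "real \<Rightarrow> real \<Rightarrow> real \<Rightarrow> real \<Rightarrow> real" where
  "theta2 \<mu> \<sigma> r u = (sqrt ((\<mu> - u)\<^sup>2 + 2 * r * \<sigma>\<^sup>2) - (\<mu> - u)) / \<sigma>\<^sup>2"

definition xi1 :: "real \<Rightarrow> real \<Rightarrow> real \<Rightarrow> real \<Rightarrow> real \<Rightarrow> real \<Rightarrow> real" where
  "xi1 \<mu> \<sigma> u0 r d \<beta> =
     (let a1 = theta1 \<mu> \<sigma> r u0; a2 = theta2 \<mu> \<sigma> r u0 in
      \<beta> * u0 / r - \<beta> * (exp (a1 * d) + a1 / a2 * exp (- a2 * d))
                      / (a1 * (exp (a1 * d) - exp (- a2 * d))))"

definition xi2 :: "real \<Rightarrow> real \<Rightarrow> real \<Rightarrow> real \<Rightarrow> real \<Rightarrow> real" where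
  "xi2 \<mu> \<sigma> u0 r \<beta> = (\<beta> * u0 - 1) / r + \<beta> / theta2 \<mu> \<sigma> r u0"

definition C2_on :: "real set \<Rightarrow> (real \<Rightarrow> real) \<Rightarrow> (real \<Rightarrow> real) \<Rightarrow> (real \<Rightarrow> real) \<Rightarrow> bool" where
  "C2_on S f f' f'' \<longleftrightarrow>
     (\<forall>z\<in>S. (f has_real_derivative f' z) (at z within S) \<and>
            (f' has_real_derivative f'' z) (at z within S)) \<and> continuous_on S f''"

definition HJB_op :: "real \<Rightarrow> real \<Rightarrow> real \<Rightarrow> real \<Rightarrow> real \<Rightarrow> real \<Rightarrow> real \<Rightarrow> real \<Rightarrow> real" where
  "HJB_op \<mu> \<sigma> u0 r \<beta> fz f'z f''z =
     - r * fz - \<mu> * f'z + \<sigma>\<^sup>2 / 2 * f''z + Sup ((\<lambda>u. (\<beta> + f'z) * u) ` {0..u0})"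

definition problem1 :: "real \<Rightarrow> real \<Rightarrow> real \<Rightarrow> real \<Rightarrow> real \<Rightarrow> real \<Rightarrow> (real \<Rightarrow> real) \<Rightarrow> (real \<Rightarrow> real) \<Rightarrow> (real \<Rightarrow> real) \<Rightarrow> bool" where
  "problem1 \<mu> \<sigma> u0 r \<beta> d f f' f'' \<longleftrightarrow>
     C2_on {0..d} f f' f'' \<and> bounded (f ` {0..d}) \<and>
     (\<forall>z\<in>{0..d}. HJB_op \<mu> \<sigma> u0 r \<beta> (f z) (f' z) (f'' z) = 0)"

definition problem2 :: "real \<Rightarrow> real \<Rightarrow> real \<Rightarrow> real \<Rightarrow> real \<Rightarrow> real \<Rightarrow> (real \<Rightarrow> real) \<Rightarrow> (real \<Rightarrow> real) \<Rightarrow> (real \<Rightarrow> real) \<Rightarrow> bool" where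
  "problem2 \<mu> \<sigma> u0 r \<beta> d g g' g'' \<longleftrightarrow>
     C2_on {d..} g g' g'' \<and> bounded (g ` {d..}) \<and>
     (\<forall>z\<in>{d..}. HJB_op \<mu> \<sigma> u0 r \<beta> (g z) (g' z) (g'' z) = 1)"

definition fC :: "real \<Rightarrow> real \<Rightarrow> real \<Rightarrow> real \<Rightarrow> real \<Rightarrow> real \<Rightarrow> real \<Rightarrow> real \<Rightarrow> real" where
  "fC \<mu> \<sigma> u0 r \<beta> d C z =
     (let a1 = theta1 \<mu> \<sigma> r u0; a2 = theta2 \<mu> \<sigma> r u0 in
      \<beta> * u0 / r - (\<beta> * u0 / r - C) / (exp (a1 * d) + a1 / a2 * exp (- a2 * d))
                   * (exp (a1 * z) + a1 / a2 * exp (- a2 * z)))"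

definition gC :: "real \<Rightarrow> real \<Rightarrow> real \<Rightarrow> real \<Rightarrow> real \<Rightarrow> real \<Rightarrow> real \<Rightarrow> real \<Rightarrow> real" where
  "gC \<mu> \<sigma> u0 r \<beta> d C z =
     (\<beta> * u0 - 1) / r + (C - (\<beta> * u0 - 1) / r) * exp (- theta2 \<mu> \<sigma> r u0 * (z - d))"

end

theory Submission
  imports Defs
begin

text \<open>Where \<open>\<beta> + f' \<ge> 0\<close>, the supremum over the controls is attained at \<open>u = u0\<close> and the
  HJB equation becomes the linear ODE \<open>\<sigma>\<^sup>2/2 f'' - (\<mu> - u0) f' - r f + \<beta> u0 = 0\<close> (resp. \<open>= 1\<close>),
  whose characteristic roots are \<open>\<alpha>\<^sub>1\<close> and \<open>-\<alpha>\<^sub>2\<close>. Both \<open>f\<^sub>C\<close> and \<open>g\<^sub>C\<close> are a constant particular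
  solution plus a combination of \<open>exp (\<alpha>\<^sub>1 z)\<close> and \<open>exp (-\<alpha>\<^sub>2 z)\<close>, so it only remains to check
  \<open>\<beta> + f' \<ge> 0\<close>. The derivative is most negative at \<open>z = d\<close>, and there this condition is
  exactly \<open>\<xi>\<^sub>1(\<beta>) \<le> C\<close> resp. \<open>C \<le> \<xi>\<^sub>2(\<beta>)\<close>.\<close>

lemma Sup_linear_atLeastAtMost:
  fixes c u0 :: real
  assumes "c \<ge> 0" "u0 \<ge> 0"
  shows "Sup ((\<lambda>u. c * u) ` {0..u0}) = c * u0"
proof (rule cSup_eq_maximum)
  show "c * u0 \<in> (\<lambda>u. c * u) ` {0..u0}" using assms by auto
  show "x \<le> c * u0" if "x \<in> (\<lambda>u. c * u) ` {0..u0}" for x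
    using that assms(1) by (auto intro: mult_left_mono)
qed

lemma HJB_op_nonneg_slope:
  assumes "\<beta> + p \<ge> 0" "u0 \<ge> 0"
  shows "HJB_op \<mu> \<sigma> u0 r \<beta> y p q = \<sigma>\<^sup>2 / 2 * q - (\<mu> - u0) * p - r * y + \<beta> * u0"
  unfolding HJB_op_def Sup_linear_atLeastAtMost[OF assms] by (simp add: algebra_simps)

lemma theta1_minus_theta2: "theta1 \<mu> \<sigma> r u - theta2 \<mu> \<sigma> r u = 2 * (\<mu> - u) / \<sigma>\<^sup>2"
  unfolding theta1_def theta2_def by (simp add: diff_divide_distrib[symmetric])

lemma theta1_times_theta2:
  assumes "\<sigma> \<noteq> 0" "r \<ge> 0"
  shows "theta1 \<mu> \<sigma> r u * theta2 \<mu> \<sigma> r u = 2 * r / \<sigma>\<^sup>2"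
proof -
  define s where "s = sqrt ((\<mu> - u)\<^sup>2 + 2 * r * \<sigma>\<^sup>2)"
  have "s\<^sup>2 = (\<mu> - u)\<^sup>2 + 2 * r * \<sigma>\<^sup>2"
    unfolding s_def using assms by simp
  then have "(s + (\<mu> - u)) * (s - (\<mu> - u)) = 2 * r * \<sigma>\<^sup>2"
    by (simp add: power2_eq_square algebra_simps)
  then show ?thesis
    unfolding theta1_def theta2_def s_def[symmetric] using assms
    by (simp add: power2_eq_square field_simps)
qed

lemma theta_pos:
  assumes "\<sigma> \<noteq> 0" "r > 0"
  shows theta1_pos: "theta1 \<mu> \<sigma> r u > 0" and theta2_pos: "theta2 \<mu> \<sigma> r u > 0"
proof -
  have "(\<mu> - u)\<^sup>2 < (\<mu> - u)\<^sup>2 + 2 * r * \<sigma>\<^sup>2" using assms by simp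
  then have "\<bar>\<mu> - u\<bar> < sqrt ((\<mu> - u)\<^sup>2 + 2 * r * \<sigma>\<^sup>2)"
    by (metis real_sqrt_abs real_sqrt_less_iff)
  then show "theta1 \<mu> \<sigma> r u > 0" "theta2 \<mu> \<sigma> r u > 0"
    unfolding theta1_def theta2_def using assms by auto
qed

lemma theta1_char_eq:
  assumes "\<sigma> \<noteq> 0" "r \<ge> 0"
  shows "\<sigma>\<^sup>2 / 2 * (theta1 \<mu> \<sigma> r u)\<^sup>2 - (\<mu> - u) * theta1 \<mu> \<sigma> r u - r = 0"
proof -
  let ?t1 = "theta1 \<mu> \<sigma> r u" and ?t2 = "theta2 \<mu> \<sigma> r u"
  have "\<sigma>\<^sup>2 / 2 * ?t1\<^sup>2 = \<sigma>\<^sup>2 / 2 * ?t1 * (?t1 - ?t2) + \<sigma>\<^sup>2 / 2 * (?t1 * ?t2)"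
    by (simp add: power2_eq_square right_diff_distrib)
  also have "\<dots> = (\<mu> - u) * ?t1 + r"
    using assms by (simp add: theta1_minus_theta2 theta1_times_theta2 field_simps)
  finally show ?thesis by linarith
qed

lemma theta2_char_eq:
  assumes "\<sigma> \<noteq> 0" "r \<ge> 0"
  shows "\<sigma>\<^sup>2 / 2 * (theta2 \<mu> \<sigma> r u)\<^sup>2 + (\<mu> - u) * theta2 \<mu> \<sigma> r u - r = 0"
proof -
  let ?t1 = "theta1 \<mu> \<sigma> r u" and ?t2 = "theta2 \<mu> \<sigma> r u"
  have "\<sigma>\<^sup>2 / 2 * ?t2\<^sup>2 = - (\<sigma>\<^sup>2 / 2 * ?t2 * (?t1 - ?t2)) + \<sigma>\<^sup>2 / 2 * (?t1 * ?t2)"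
    by (simp add: power2_eq_square right_diff_distrib)
  also have "\<dots> = - (\<mu> - u) * ?t2 + r"
    using assms by (simp add: theta1_minus_theta2 theta1_times_theta2 field_simps)
  finally show ?thesis by linarith
qed

lemma C2_onI:
  assumes "\<And>z. z \<in> S \<Longrightarrow> (f has_real_derivative f' z) (at z)"
    and "\<And>z. z \<in> S \<Longrightarrow> (f' has_real_derivative f'' z) (at z)"
    and "continuous_on S f''"
  shows "C2_on S f f' f''"
  unfolding C2_on_def using assms by (auto intro: has_field_derivative_at_within)

lemma bounded_exp_decay:
  fixes a L c d :: real
  assumes "a \<ge> 0"
  shows "bounded ((\<lambda>z. L + c * exp (- a * (z - d))) ` {d..})"
proof -
  have "\<bar>L + c * exp (- a * (z - d))\<bar> \<le> \<bar>L\<bar> + \<bar>c\<bar>" if "z \<ge> d" for z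
  proof -
    have "exp (- a * (z - d)) \<le> 1" using that assms by simp
    then have "\<bar>c * exp (- a * (z - d))\<bar> \<le> \<bar>c\<bar>"
      by (simp add: abs_mult mult_left_le)
    then show ?thesis by linarith
  qed
  then show ?thesis unfolding bounded_iff by auto
qed

lemma mult_le_of_le_at_endpoint:
  fixes x w W b :: real
  assumes "0 \<le> w" "w \<le> W" "x * W \<le> b" "0 \<le> b"
  shows "x * w \<le> b"
proof (cases "x \<ge> 0")
  case True
  then show ?thesis using assms by (meson mult_left_mono order_trans)
next
  case False
  then show ?thesis using assms by (meson mult_nonpos_nonneg not_le order_trans less_imp_le)
qed

lemma fC_solves_problem1:
  fixes \<mu> \<sigma> u0 r \<beta> d C :: real
  assumes "\<sigma> > 0" "u0 \<ge> 0" "r > 0" "\<beta> \<ge> 0" "d > 0" "xi1 \<mu> \<sigma> u0 r d \<beta> \<le> C"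
  shows "\<exists>f' f''. problem1 \<mu> \<sigma> u0 r \<beta> d (fC \<mu> \<sigma> u0 r \<beta> d C) f' f'' \<and>
                 f' 0 = 0 \<and> fC \<mu> \<sigma> u0 r \<beta> d C d = C"
proof -
  define a1 where "a1 = theta1 \<mu> \<sigma> r u0"
  define a2 where "a2 = theta2 \<mu> \<sigma> r u0"
  define K where "K = \<beta> * u0 / r"
  define D where "D = exp (a1 * d) + a1 / a2 * exp (- a2 * d)"
  define A where "A = (K - C) / D"
  define f where "f = (\<lambda>z. K - A * (exp (a1 * z) + a1 / a2 * exp (- a2 * z)))"
  define f' where "f' = (\<lambda>z. A * a1 * (exp (- a2 * z) - exp (a1 * z)))"
  define f'' where "f'' = (\<lambda>z. - A * a1 * (a1 * exp (a1 * z) + a2 * exp (- a2 * z)))"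
  have a1: "a1 > 0" and a2: "a2 > 0"
    unfolding a1_def a2_def using assms theta_pos by auto
  have "D > 0" unfolding D_def using a1 a2 by (simp add: add_pos_pos)
  have f_eq: "fC \<mu> \<sigma> u0 r \<beta> d C = f"
    unfolding fC_def f_def Let_def a1_def[symmetric] a2_def[symmetric] K_def A_def D_def ..
  have C2: "C2_on {0..d} f f' f''"
    by (rule C2_onI) (unfold f_def f'_def f''_def, use a2 in
        \<open>auto intro!: derivative_eq_intros continuous_intros simp: field_simps\<close>)
  have ode: "\<sigma>\<^sup>2 / 2 * f'' z - (\<mu> - u0) * f' z - r * f z + \<beta> * u0 = 0" for z
  proof -
    have "\<sigma>\<^sup>2 / 2 * f'' z - (\<mu> - u0) * f' z - r * f z
        = - r * K - A * exp (a1 * z) * (\<sigma>\<^sup>2 / 2 * a1\<^sup>2 - (\<mu> - u0) * a1 - r)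
          - A * a1 / a2 * exp (- a2 * z) * (\<sigma>\<^sup>2 / 2 * a2\<^sup>2 + (\<mu> - u0) * a2 - r)"
      unfolding f_def f'_def f''_def using a2 by (simp add: power2_eq_square field_simps)
    also have "\<dots> = - \<beta> * u0"
      using theta1_char_eq[of \<sigma> r \<mu> u0] theta2_char_eq[of \<sigma> r \<mu> u0] assms
      unfolding a1_def[symmetric] a2_def[symmetric] K_def by simp
    finally show ?thesis by simp
  qed
  have slope: "\<beta> + f' z \<ge> 0" if "z \<in> {0..d}" for z
  proof -
    define E where "E = exp (a1 * d) - exp (- a2 * d)"
    have "E > 0"
      unfolding E_def using mult_pos_pos[OF a1 assms(5)] mult_pos_pos[OF a2 assms(5)] by simp
    have "xi1 \<mu> \<sigma> u0 r d \<beta> = K - \<beta> * D / (a1 * E)"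
      unfolding xi1_def Let_def a1_def[symmetric] a2_def[symmetric] K_def D_def E_def ..
    then have "K - C \<le> \<beta> * D / (a1 * E)" using assms(6) by simp
    then have "(K - C) * (a1 * E) \<le> \<beta> * D"
      using a1 \<open>E > 0\<close> by (simp add: pos_le_divide_eq)
    then have AE: "A * a1 * E \<le> \<beta>"
      unfolding A_def using \<open>D > 0\<close> by (simp add: pos_divide_le_eq mult.assoc)
    have "0 \<le> a1 * z" "0 \<le> a2 * z" "a1 * z \<le> a1 * d" "a2 * z \<le> a2 * d"
      using that a1 a2 by (auto intro: mult_left_mono)
    then have "0 \<le> exp (a1 * z) - exp (- a2 * z)" "exp (a1 * z) - exp (- a2 * z) \<le> E"
      unfolding E_def by (auto intro!: diff_mono)
    then have "A * a1 * (exp (a1 * z) - exp (- a2 * z)) \<le> \<beta>"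
      using mult_le_of_le_at_endpoint AE assms(4) by blast
    then show ?thesis unfolding f'_def by (simp add: algebra_simps)
  qed
  have "problem1 \<mu> \<sigma> u0 r \<beta> d f f' f''"
    unfolding problem1_def
  proof (intro conjI ballI C2)
    show "bounded (f ` {0..d})"
      unfolding f_def by (intro compact_imp_bounded compact_continuous_image continuous_intros compact_Icc)
    show "HJB_op \<mu> \<sigma> u0 r \<beta> (f z) (f' z) (f'' z) = 0" if "z \<in> {0..d}" for z
      using ode[of z] HJB_op_nonneg_slope[OF slope[OF that] assms(2)] by simp
  qed
  moreover have "f' 0 = 0" unfolding f'_def by simp
  moreover have "f d = C" unfolding f_def A_def D_def[symmetric] using \<open>D > 0\<close> by simp
  ultimately show ?thesis unfolding f_eq by blast
qed

lemma gC_solves_problem2: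
  fixes \<mu> \<sigma> u0 r \<beta> d C :: real
  assumes "\<sigma> > 0" "u0 \<ge> 0" "r > 0" "\<beta> \<ge> 0" "C \<le> xi2 \<mu> \<sigma> u0 r \<beta>"
  shows "\<exists>g' g''. problem2 \<mu> \<sigma> u0 r \<beta> d (gC \<mu> \<sigma> u0 r \<beta> d C) g' g'' \<and>
                 gC \<mu> \<sigma> u0 r \<beta> d C d = C"
proof -
  define a2 where "a2 = theta2 \<mu> \<sigma> r u0"
  define L where "L = (\<beta> * u0 - 1) / r"
  define c where "c = C - L"
  define g where "g = (\<lambda>z. L + c * exp (- a2 * (z - d)))"
  define g' where "g' = (\<lambda>z. - a2 * c * exp (- a2 * (z - d)))"
  define g'' where "g'' = (\<lambda>z. a2\<^sup>2 * c * exp (- a2 * (z - d)))"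
  have a2: "a2 > 0" unfolding a2_def using assms theta2_pos by auto
  have g_eq: "gC \<mu> \<sigma> u0 r \<beta> d C = g"
    unfolding gC_def g_def a2_def[symmetric] L_def c_def ..
  have C2: "C2_on {d..} g g' g''"
    by (rule C2_onI) (unfold g_def g'_def g''_def,
        auto intro!: derivative_eq_intros continuous_intros simp: power2_eq_square)
  have ode: "\<sigma>\<^sup>2 / 2 * g'' z - (\<mu> - u0) * g' z - r * g z + \<beta> * u0 = 1" for z
  proof -
    have "\<sigma>\<^sup>2 / 2 * g'' z - (\<mu> - u0) * g' z - r * g z
        = - r * L + c * exp (- a2 * (z - d)) * (\<sigma>\<^sup>2 / 2 * a2\<^sup>2 + (\<mu> - u0) * a2 - r)"
      unfolding g_def g'_def g''_def by (simp add: algebra_simps)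
    also have "\<dots> = 1 - \<beta> * u0"
      using theta2_char_eq[of \<sigma> r \<mu> u0] assms unfolding a2_def[symmetric] L_def by simp
    finally show ?thesis by simp
  qed
  have slope: "\<beta> + g' z \<ge> 0" if "z \<in> {d..}" for z
  proof -
    have "C \<le> L + \<beta> / a2" using assms(5) unfolding xi2_def L_def a2_def .
    then have "a2 * c \<le> \<beta>" unfolding c_def using a2 by (simp add: field_simps)
    moreover have "exp (- a2 * (z - d)) \<le> 1" using that a2 by simp
    ultimately have "a2 * c * exp (- a2 * (z - d)) \<le> \<beta>"
      using assms(4) mult_le_of_le_at_endpoint[of "exp (- a2 * (z - d))" 1 "a2 * c" \<beta>] by simp
    then show ?thesis unfolding g'_def by simp
  qed
  have "problem2 \<mu> \<sigma> u0 r \<beta> d g g' g''"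
    unfolding problem2_def
  proof (intro conjI ballI C2)
    show "bounded (g ` {d..})"
      unfolding g_def using a2 by (intro bounded_exp_decay) simp
    show "HJB_op \<mu> \<sigma> u0 r \<beta> (g z) (g' z) (g'' z) = 1" if "z \<in> {d..}" for z
      using ode[of z] HJB_op_nonneg_slope[OF slope[OF that] assms(2)] by simp
  qed
  moreover have "g d = C" unfolding g_def c_def by simp
  ultimately show ?thesis unfolding g_eq by blast
qed

theorem proposition4p2:
  fixes \<mu> \<sigma> u0 r \<beta> d C :: real
  assumes "\<sigma> > 0" "u0 > 0" "r > 0" "\<beta> > 0" "d > 0"
  shows "(xi1 \<mu> \<sigma> u0 r d \<beta> \<le> C \<and> C < \<beta> * u0 / r \<longrightarrow>
            (\<exists>f' f''. problem1 \<mu> \<sigma> u0 r \<beta> d (fC \<mu> \<sigma> u0 r \<beta> d C) f' f'' \<and>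
                      f' 0 = 0 \<and> fC \<mu> \<sigma> u0 r \<beta> d C d = C))
       \<and> ((\<beta> * u0 - 1) / r < C \<and> C \<le> xi2 \<mu> \<sigma> u0 r \<beta> \<longrightarrow>
            (\<exists>g' g''. problem2 \<mu> \<sigma> u0 r \<beta> d (gC \<mu> \<sigma> u0 r \<beta> d C) g' g'' \<and>
                      gC \<mu> \<sigma> u0 r \<beta> d C d = C \<and> bounded (gC \<mu> \<sigma> u0 r \<beta> d C ` {d..})))"
  using fC_solves_problem1[of \<sigma> u0 r \<beta> d \<mu> C] gC_solves_problem2[of \<sigma> u0 r \<beta> C \<mu> d] assms
  unfolding problem2_def by auto

end
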